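(* Let $m^*$ be the exact model of the environment, fix a base policy $\pi^b$, and let $\bar m,\bar{\bar m}\in\mathcal{M}$. Suppose $\bar m$ is a PCM or a PRM of $m^*$ with respect to $\bar\Pi=\{\pi_{\bar m}^r,\pi_{\bar m}^{ce}\}$ and $J$, and $\bar{\bar m}$ is a performance-maximizing model (PXM) of $m^*$ with respect to $\bar{\bar\Pi}=\{\pi_{\bar{\bar m}}^r,\pi_{\bar{\bar m}}^{ce}\}$ and $J$. Then $J_{m^*}^{\pi_{\bar{\bar m}}^{ce}}\ge J_{m^*}^{\pi_{\bar m}^{r}}$.
   Context: Fix finite sets $\mathcal{S}$ (states) and $\mathcal{A}$ (actions) and a discount factor $\gamma\in[0,1)$. A model is a triple $m=(p,r,d)$ with transition kernel $p:\mathcal{S}\times\mathcal{A}\times\mathcal{S}\to[0,1]$, reward function $r:\mathcal{S}\times\mathcal{A}\times\mathcal{S}\to\mathbb{R}$ and initial state distribution $d$ on $\mathcal{S}$; $\mathcal{M}$ is the set of all such models, and $m^*\in\mathcal{M}$ denotes the exact model of the environment. A policy is a map $\pi:\mathcal{S}\times\mathcal{A}\to[0,1]$ giving a distribution over actions at each state; $\mathbb{\Pi}$ is the set of all policies. For $m=(p,r,d)$ and $\pi\in\mathbb{\Pi}$, the performance is $J_m^\pi=\mathbb{E}_{\pi,p}[\sum_{t=0}^\infty\gamma^t r(S_t,A_t,S_{t+1})\mid S_0\sim d]$. Given the base policy $\pi^b$ and a model $m$, the rollout policy $\pi_m^r$ is the policy obtained by one step of policy iteration on $\pi^b$ in $m$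 (policy evaluation of $\pi^b$ in $m$ followed by greedy policy improvement), and the certainty-equivalence policy $\pi_m^{ce}$ is the policy obtained by running policy iteration or value iteration to convergence in $m$ starting from $\pi^b$ (an optimal policy of $m$). Given $\Pi\subseteq\mathbb{\Pi}$: $m$ is a PCM of $m^*$ w.r.t. $\Pi$ and $J$ if for all $\pi^i,\pi^j\in\Pi$, $J_m^{\pi^i}\ge J_m^{\pi^j}$ implies $J_{m^*}^{\pi^i}\le J_{m^*}^{\pi^j}$; $m$ is a PRM of $m^*$ w.r.t. $\Pi$ and $J$ if for all $\pi^i,\pi^j\in\Pi$, $J_m^{\pi^i}\ge J_m^{\pi^j}$ implies $J_{m^*}^{\pi^i}\ge J_{m^*}^{\pi^j}$; $m$ is a PXM of $m^*$ w.r.t. $\Pi$ and $J$ if $m$ is a PRM of $m^*$ w.r.t. $\Pi$ and $J$ and every optimal policy $\pi_m^*$ of $m$ that belongs to $\Pi$ satisfies $J_{m^*}^{\pi_m^*}=\max_{\pi\in\mathbb{\Pi}}J_{m^*}^{\pi}$. *)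

theory Defs
  imports Complex_Main
begin

text \<open>Finite MDP setting: states 's::finite, actions 'a::finite.
  A model is a triple (p, r, d); a policy maps states to distributions over actions.\<close>

type_synonym ('s, 'a) model =
  "('s \<Rightarrow> 'a \<Rightarrow> 's \<Rightarrow> real) \<times> ('s \<Rightarrow> 'a \<Rightarrow> 's \<Rightarrow> real) \<times> ('s \<Rightarrow> real)"

type_synonym ('s, 'a) policy = "'s \<Rightarrow> 'a \<Rightarrow> real"

definition is_dist :: "('x::finite \<Rightarrow> real) \<Rightarrow> bool" where
  "is_dist f \<longleftrightarrow> (\<forall>x. 0 \<le> f x) \<and> sum f UNIV = 1"

definition valid_model :: "('s::finite, 'a::finite) model \<Rightarrow> bool" where
  "valid_model m = (case m of (p, r, d) \<Rightarrow> (\<forall>s a. is_dist (p s a)) \<and> is_dist d)"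

definition valid_policy :: "('s::finite, 'a::finite) policy \<Rightarrow> bool" where
  "valid_policy \<pi> \<longleftrightarrow> (\<forall>s. is_dist (\<pi> s))"

primrec state_dist ::
  "('s::finite, 'a::finite) policy \<Rightarrow> ('s \<Rightarrow> 'a \<Rightarrow> 's \<Rightarrow> real) \<Rightarrow> ('s \<Rightarrow> real) \<Rightarrow> nat \<Rightarrow> 's \<Rightarrow> real"
where
  "state_dist \<pi> p d 0 = d"
| "state_dist \<pi> p d (Suc t) =
     (\<lambda>s'. \<Sum>s\<in>UNIV. \<Sum>a\<in>UNIV. state_dist \<pi> p d t s * \<pi> s a * p s a s')"

definition exp_reward :: "('s::finite, 'a::finite) policy \<Rightarrow> ('s, 'a) model \<Rightarrow> nat \<Rightarrow> real" where
  "exp_reward \<pi> m t = (case m of (p, r, d) \<Rightarrow>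
     \<Sum>s\<in>UNIV. \<Sum>a\<in>UNIV. \<Sum>s'\<in>UNIV. state_dist \<pi> p d t s * \<pi> s a * p s a s' * r s a s')"

definition perf :: "real \<Rightarrow> ('s::finite, 'a::finite) model \<Rightarrow> ('s, 'a) policy \<Rightarrow> real" where
  "perf \<gamma> m \<pi> = (\<Sum>t. \<gamma> ^ t * exp_reward \<pi> m t)"

definition state_value :: "real \<Rightarrow> ('s::finite, 'a::finite) model \<Rightarrow> ('s, 'a) policy \<Rightarrow> 's \<Rightarrow> real" where
  "state_value \<gamma> m \<pi> s = (case m of (p, r, d) \<Rightarrow>
     perf \<gamma> (p, r, (\<lambda>s0. if s0 = s then 1 else 0)) \<pi>)"

definition q_value :: "real \<Rightarrow> ('s::finite, 'a::finite) model \<Rightarrow> ('s, 'a) policy \<Rightarrow> 's \<Rightarrow> 'a \<Rightarrow> real" where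
  "q_value \<gamma> m \<pi> s a = (case m of (p, r, d) \<Rightarrow>
     \<Sum>s'\<in>UNIV. p s a s' * (r s a s' + \<gamma> * state_value \<gamma> m \<pi> s'))"

text \<open>Rollout policy: one step of policy iteration on \<pi>b in m, i.e. a policy greedy
  w.r.t. Q_m^{\<pi>b} (all its mass on maximizing actions).\<close>
definition is_rollout :: "real \<Rightarrow> ('s::finite, 'a::finite) model \<Rightarrow> ('s, 'a) policy \<Rightarrow> ('s, 'a) policy \<Rightarrow> bool" where
  "is_rollout \<gamma> m \<pi>b \<pi> \<longleftrightarrow> valid_policy \<pi> \<and>
     (\<forall>s a. 0 < \<pi> s a \<longrightarrow> (\<forall>a'. q_value \<gamma> m \<pi>b s a' \<le> q_value \<gamma> m \<pi>b s a))"

text \<open>Certainty-equivalence policy: the limit of policy/value iteration in m, i.e. a policy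
  that is optimal in m from every state.\<close>
definition is_ce :: "real \<Rightarrow> ('s::finite, 'a::finite) model \<Rightarrow> ('s, 'a) policy \<Rightarrow> bool" where
  "is_ce \<gamma> m \<pi> \<longleftrightarrow> valid_policy \<pi> \<and>
     (\<forall>\<pi>'. valid_policy \<pi>' \<longrightarrow> (\<forall>s. state_value \<gamma> m \<pi>' s \<le> state_value \<gamma> m \<pi> s))"

definition is_optimal :: "real \<Rightarrow> ('s::finite, 'a::finite) model \<Rightarrow> ('s, 'a) policy \<Rightarrow> bool" where
  "is_optimal \<gamma> m \<pi> \<longleftrightarrow> valid_policy \<pi> \<and>
     (\<forall>\<pi>'. valid_policy \<pi>' \<longrightarrow> perf \<gamma> m \<pi>' \<le> perf \<gamma> m \<pi>)"

definition PCM :: "real \<Rightarrow> ('s::finite, 'a::finite) model \<Rightarrow> ('s, 'a) model \<Rightarrow> ('s, 'a) policy set \<Rightarrow> bool" where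
  "PCM \<gamma> mstar m \<Pi> \<longleftrightarrow> (\<forall>\<pi>i\<in>\<Pi>. \<forall>\<pi>j\<in>\<Pi>.
     perf \<gamma> m \<pi>i \<ge> perf \<gamma> m \<pi>j \<longrightarrow> perf \<gamma> mstar \<pi>i \<le> perf \<gamma> mstar \<pi>j)"

definition PRM :: "real \<Rightarrow> ('s::finite, 'a::finite) model \<Rightarrow> ('s, 'a) model \<Rightarrow> ('s, 'a) policy set \<Rightarrow> bool" where
  "PRM \<gamma> mstar m \<Pi> \<longleftrightarrow> (\<forall>\<pi>i\<in>\<Pi>. \<forall>\<pi>j\<in>\<Pi>.
     perf \<gamma> m \<pi>i \<ge> perf \<gamma> m \<pi>j \<longrightarrow> perf \<gamma> mstar \<pi>i \<ge> perf \<gamma> mstar \<pi>j)"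

definition PXM :: "real \<Rightarrow> ('s::finite, 'a::finite) model \<Rightarrow> ('s, 'a) model \<Rightarrow> ('s, 'a) policy set \<Rightarrow> bool" where
  "PXM \<gamma> mstar m \<Pi> \<longleftrightarrow> PRM \<gamma> mstar m \<Pi> \<and>
     (\<forall>\<pi>\<in>\<Pi>. is_optimal \<gamma> m \<pi> \<longrightarrow>
        (\<forall>\<pi>'. valid_policy \<pi>' \<longrightarrow> perf \<gamma> mstar \<pi>' \<le> perf \<gamma> mstar \<pi>))"

end

theory Submission
  imports Defs
begin

text \<open>Writing the initial distribution d as a mixture of point masses, the performance
  J_m^\<pi> is the d-average of the state values V_m^\<pi>. Hence a certainty-equivalence policy,
  which maximizes V_m^\<pi> at every state, also maximizes J_m, i.e. it is an optimal policy of m.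
  Since \<pi>^ce of the second model lies in the set on which that model is a PXM, it attains
  the optimal performance in the true model, which in particular dominates that of the valid
  policy \<pi>^r of the first model.\<close>

lemma is_dist_nonneg: "is_dist (f :: 'x::finite \<Rightarrow> real) \<Longrightarrow> 0 \<le> f x"
  by (simp add: is_dist_def)

lemma is_dist_le_one:
  assumes "is_dist (f :: 'x::finite \<Rightarrow> real)"
  shows "f x \<le> 1"
proof -
  have "f x \<le> sum f UNIV"
    using assms by (intro member_le_sum) (auto simp: is_dist_def)
  then show ?thesis
    using assms by (simp add: is_dist_def)
qed

lemma state_dist_is_dist:
  fixes \<pi> :: "('s::finite, 'a::finite) policy"
  assumes "valid_policy \<pi>" and "\<forall>s a. is_dist (p s a)" and "is_dist d"
  shows "is_dist (state_dist \<pi> p d t)"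
proof (induction t)
  case 0
  then show ?case using assms by simp
next
  case (Suc t)
  let ?q = "state_dist \<pi> p d t"
  have nonneg: "\<forall>x. 0 \<le> state_dist \<pi> p d (Suc t) x"
    using Suc assms unfolding is_dist_def valid_policy_def
    by (auto intro!: sum_nonneg mult_nonneg_nonneg)
  have "sum (state_dist \<pi> p d (Suc t)) UNIV
      = (\<Sum>s'\<in>UNIV. \<Sum>s\<in>UNIV. \<Sum>a\<in>UNIV. ?q s * \<pi> s a * p s a s')"
    by simp
  also have "\<dots> = (\<Sum>s\<in>UNIV. \<Sum>a\<in>UNIV. \<Sum>s'\<in>UNIV. ?q s * \<pi> s a * p s a s')"
    by (subst sum.swap) (rule sum.cong[OF refl], rule sum.swap)
  also have "\<dots> = (\<Sum>s\<in>UNIV. \<Sum>a\<in>UNIV. ?q s * \<pi> s a * (\<Sum>s'\<in>UNIV. p s a s'))"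
    by (simp add: sum_distrib_left)
  also have "\<dots> = (\<Sum>s\<in>UNIV. ?q s * (\<Sum>a\<in>UNIV. \<pi> s a))"
    using assms(2) by (simp add: is_dist_def sum_distrib_left)
  also have "\<dots> = 1"
    using assms(1) Suc by (simp add: is_dist_def valid_policy_def)
  finally show ?case
    using nonneg by (simp add: is_dist_def)
qed

lemma state_dist_mixture_point_masses:
  fixes \<pi> :: "('s::finite, 'a::finite) policy"
  shows "state_dist \<pi> p d t s' =
    (\<Sum>s0\<in>UNIV. d s0 * state_dist \<pi> p (\<lambda>x. if x = s0 then 1 else 0) t s')"
proof (induction t arbitrary: s')
  case 0
  then show ?case by (simp add: if_distrib cong: if_cong)
next
  case (Suc t)
  define X where "X = (\<lambda>s0. state_dist \<pi> p (\<lambda>x. if x = s0 then 1 else 0) t)"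
  have "state_dist \<pi> p d (Suc t) s' =
      (\<Sum>s\<in>UNIV. \<Sum>a\<in>UNIV. (\<Sum>s0\<in>UNIV. d s0 * X s0 s) * \<pi> s a * p s a s')"
    using Suc by (simp add: X_def)
  also have "\<dots> = (\<Sum>s\<in>UNIV. \<Sum>a\<in>UNIV. \<Sum>s0\<in>UNIV. d s0 * (X s0 s * \<pi> s a * p s a s'))"
    by (simp add: sum_distrib_right mult.assoc)
  also have "\<dots> = (\<Sum>s0\<in>UNIV. \<Sum>s\<in>UNIV. \<Sum>a\<in>UNIV. d s0 * (X s0 s * \<pi> s a * p s a s'))"
    by (subst sum.swap) (rule sum.cong[OF refl], rule sum.swap)
  also have "\<dots> = (\<Sum>s0\<in>UNIV. d s0 * (\<Sum>s\<in>UNIV. \<Sum>a\<in>UNIV. X s0 s * \<pi> s a * p s a s'))"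
    by (simp add: sum_distrib_left)
  finally show ?case
    by (simp add: X_def)
qed

lemma exp_reward_mixture_point_masses:
  fixes \<pi> :: "('s::finite, 'a::finite) policy"
  shows "exp_reward \<pi> (p, r, d) t =
    (\<Sum>s0\<in>UNIV. d s0 * exp_reward \<pi> (p, r, \<lambda>x. if x = s0 then 1 else 0) t)"
proof -
  define X where "X = (\<lambda>s0. state_dist \<pi> p (\<lambda>x. if x = s0 then 1 else 0) t)"
  define g where "g = (\<lambda>s. \<Sum>a\<in>UNIV. \<Sum>s'\<in>UNIV. \<pi> s a * p s a s' * r s a s')"
  have exp_reward_eq: "exp_reward \<pi> (p, r, d') t = (\<Sum>s\<in>UNIV. state_dist \<pi> p d' t s * g s)" for d'
    by (simp add: exp_reward_def g_def sum_distrib_left mult.assoc)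
  have "exp_reward \<pi> (p, r, d) t = (\<Sum>s\<in>UNIV. (\<Sum>s0\<in>UNIV. d s0 * X s0 s) * g s)"
    by (simp add: exp_reward_eq X_def state_dist_mixture_point_masses[of \<pi> p d t])
  also have "\<dots> = (\<Sum>s0\<in>UNIV. \<Sum>s\<in>UNIV. d s0 * (X s0 s * g s))"
    by (subst sum.swap) (simp add: sum_distrib_right mult.assoc)
  also have "\<dots> = (\<Sum>s0\<in>UNIV. d s0 * exp_reward \<pi> (p, r, \<lambda>x. if x = s0 then 1 else 0) t)"
    by (simp add: exp_reward_eq X_def sum_distrib_left)
  finally show ?thesis .
qed

lemma abs_exp_reward_le:
  fixes \<pi> :: "('s::finite, 'a::finite) policy"
  assumes "valid_policy \<pi>" and "\<forall>s a. is_dist (p s a)" and "is_dist d"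
  shows "\<bar>exp_reward \<pi> (p, r, d) t\<bar> \<le> (\<Sum>s\<in>UNIV. \<Sum>a\<in>UNIV. \<Sum>s'\<in>UNIV. \<bar>r s a s'\<bar>)"
proof -
  let ?q = "state_dist \<pi> p d t"
  have q: "is_dist ?q"
    using state_dist_is_dist assms by blast
  have "\<bar>exp_reward \<pi> (p, r, d) t\<bar> \<le>
      (\<Sum>s\<in>UNIV. \<Sum>a\<in>UNIV. \<Sum>s'\<in>UNIV. \<bar>?q s * \<pi> s a * p s a s' * r s a s'\<bar>)"
    unfolding exp_reward_def by (auto intro!: order_trans[OF sum_abs] sum_mono)
  also have "\<dots> \<le> (\<Sum>s\<in>UNIV. \<Sum>a\<in>UNIV. \<Sum>s'\<in>UNIV. \<bar>r s a s'\<bar>)"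
  proof (intro sum_mono)
    fix s a s'
    have "is_dist (\<pi> s)"
      using assms(1) by (simp add: valid_policy_def)
    then have "0 \<le> ?q s * \<pi> s a * p s a s'" and "?q s * \<pi> s a * p s a s' \<le> 1"
      using q assms(2) is_dist_nonneg is_dist_le_one
      by (metis mult_nonneg_nonneg, metis mult_le_one mult_nonneg_nonneg)
    then show "\<bar>?q s * \<pi> s a * p s a s' * r s a s'\<bar> \<le> \<bar>r s a s'\<bar>"
      by (simp add: abs_mult mult_left_le_one_le)
  qed
  finally show ?thesis .
qed

lemma summable_discounted_exp_reward:
  fixes \<pi> :: "('s::finite, 'a::finite) policy"
  assumes "valid_policy \<pi>" and "\<forall>s a. is_dist (p s a)" and "is_dist d"
    and "0 \<le> \<gamma>" and "\<gamma> < 1"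
  shows "summable (\<lambda>t. \<gamma> ^ t * exp_reward \<pi> (p, r, d) t)"
proof (rule summable_comparison_test)
  let ?R = "\<Sum>s\<in>UNIV. \<Sum>a\<in>UNIV. \<Sum>s'\<in>UNIV. \<bar>r s a s'\<bar>"
  show "\<exists>N. \<forall>n\<ge>N. norm (\<gamma> ^ n * exp_reward \<pi> (p, r, d) n) \<le> \<gamma> ^ n * ?R"
    using abs_exp_reward_le[OF assms(1-3)] assms(4)
    by (auto simp: abs_mult intro!: mult_left_mono)
  show "summable (\<lambda>n. \<gamma> ^ n * ?R)"
    using assms(4,5) by (intro summable_mult2 summable_geometric) simp
qed

lemma perf_eq_sum_state_value:
  fixes \<pi> :: "('s::finite, 'a::finite) policy"
  assumes "valid_policy \<pi>" and "\<forall>s a. is_dist (p s a)" and "0 \<le> \<gamma>" and "\<gamma> < 1"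
  shows "perf \<gamma> (p, r, d) \<pi> = (\<Sum>s0\<in>UNIV. d s0 * state_value \<gamma> (p, r, d) \<pi> s0)"
proof -
  define E where "E = (\<lambda>s0 t. \<gamma> ^ t * exp_reward \<pi> (p, r, \<lambda>x. if x = s0 then 1 else 0) t)"
  have summable_E: "summable (E s0)" for s0
    unfolding E_def using assms
    by (intro summable_discounted_exp_reward) (auto simp: is_dist_def)
  have "perf \<gamma> (p, r, d) \<pi> = (\<Sum>t. \<Sum>s0\<in>UNIV. d s0 * E s0 t)"
    unfolding perf_def E_def
    by (subst exp_reward_mixture_point_masses) (simp add: sum_distrib_left mult.left_commute)
  also have "\<dots> = (\<Sum>s0\<in>UNIV. \<Sum>t. d s0 * E s0 t)"
    by (rule suminf_sum) (intro summable_mult summable_E)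
  also have "\<dots> = (\<Sum>s0\<in>UNIV. d s0 * (\<Sum>t. E s0 t))"
    by (intro sum.cong refl suminf_mult summable_E)
  also have "\<dots> = (\<Sum>s0\<in>UNIV. d s0 * state_value \<gamma> (p, r, d) \<pi> s0)"
    by (simp add: E_def state_value_def perf_def)
  finally show ?thesis .
qed

lemma is_ce_imp_is_optimal:
  fixes m :: "('s::finite, 'a::finite) model"
  assumes "0 \<le> \<gamma>" and "\<gamma> < 1" and "valid_model m" and "is_ce \<gamma> m \<pi>"
  shows "is_optimal \<gamma> m \<pi>"
  unfolding is_optimal_def
proof (intro conjI allI impI)
  obtain p r d where m: "m = (p, r, d)"
    by (cases m) auto
  have p: "\<forall>s a. is_dist (p s a)" and d: "is_dist d"
    using assms(3) by (auto simp: m valid_model_def)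
  show \<pi>: "valid_policy \<pi>"
    using assms(4) by (simp add: is_ce_def)
  fix \<pi>' :: "('s, 'a) policy"
  assume \<pi>': "valid_policy \<pi>'"
  have "perf \<gamma> m \<pi>' = (\<Sum>s0\<in>UNIV. d s0 * state_value \<gamma> m \<pi>' s0)"
    unfolding m by (rule perf_eq_sum_state_value[OF \<pi>' p assms(1,2)])
  also have "\<dots> \<le> (\<Sum>s0\<in>UNIV. d s0 * state_value \<gamma> m \<pi> s0)"
    using assms(4) \<pi>' d
    by (intro sum_mono mult_left_mono) (auto simp: is_ce_def is_dist_def)
  also have "\<dots> = perf \<gamma> m \<pi>"
    unfolding m by (rule perf_eq_sum_state_value[OF \<pi> p assms(1,2), symmetric])
  finally show "perf \<gamma> m \<pi>' \<le> perf \<gamma> m \<pi>" .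
qed

theorem proposition4:
  fixes \<gamma> :: real
    and mstar m1 m2 :: "('s::finite, 'a::finite) model"
    and \<pi>b r1 ce1 r2 ce2 :: "('s, 'a) policy"
  assumes "0 \<le> \<gamma>" and "\<gamma> < 1"
    and "valid_model mstar" and "valid_model m1" and "valid_model m2"
    and "valid_policy \<pi>b"
    and "is_rollout \<gamma> m1 \<pi>b r1" and "is_ce \<gamma> m1 ce1"
    and "is_rollout \<gamma> m2 \<pi>b r2" and "is_ce \<gamma> m2 ce2"
    and "PCM \<gamma> mstar m1 {r1, ce1} \<or> PRM \<gamma> mstar m1 {r1, ce1}"
    and "PXM \<gamma> mstar m2 {r2, ce2}"
  shows "perf \<gamma> mstar ce2 \<ge> perf \<gamma> mstar r1"
proof -
  have "is_optimal \<gamma> m2 ce2"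
    using assms(1,2,5,10) by (rule is_ce_imp_is_optimal)
  then have "\<forall>\<pi>. valid_policy \<pi> \<longrightarrow> perf \<gamma> mstar \<pi> \<le> perf \<gamma> mstar ce2"
    using assms(12) by (simp add: PXM_def)
  moreover have "valid_policy r1"
    using assms(7) by (simp add: is_rollout_def)
  ultimately show ?thesis
    by blast
qed

end
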